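(* Let $V$ be a commutative unital quantale whose underlying lattice is a frame and in which $k=\top$. Let $(X,a)$, $(Y,b)$ be $V$-groups and $\varphi\colon Y\to\mathrm{Aut}(X)$ a group action such that $\varphi_y\colon(X,a)\to(X,a)$ is a $V$-functor for every $y\in Y$. Define $\mathrm{lex}\colon(X\times Y)\times(X\times Y)\to V$ by $\mathrm{lex}((x,y),(x',y'))=a(x,x')$ if $y=y'$ and $\mathrm{lex}((x,y),(x',y'))=b(y,y')$ if $y\neq y'$. The following are equivalent: (i) $(X,a)\xrightarrow{\langle 1,0\rangle}(X\rtimes_\varphi Y,\mathrm{lex})\underset{\langle 0,1\rangle}{\overset{\pi_2}{\rightleftarrows}}(Y,b)$ is a split extension in $\mathsf{VGrp}$; (ii) for all $x\in X$ and all $y\in Y\setminus\{0\}$, $b(y,0)\otimes b(0,y)\le a(x,0)$.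
   Context: A commutative unital quantale $V$ is a complete lattice with a commutative associative operation $\otimes$ with unit $k$ preserving arbitrary joins in each variable. A $V$-category $(X,a)$: $a\colon X\times X\to V$ with $k\le a(x,x)$ and $a(x,x')\otimes a(x',x'')\le a(x,x'')$; a $V$-functor is a map $f$ with $a(x,x')\le b(f(x),f(x'))$. A $V$-group $(X,a,+)$ is a $V$-category with a group structure (additive, not necessarily abelian) such that $a(x_1,x_2)\otimes a(x_1',x_2')\le a(x_1+x_1',x_2+x_2')$; $V$-homomorphisms are group homomorphisms that are $V$-functors; category $\mathsf{VGrp}$ (pointed since $k=\top$). The semidirect product $X\rtimes_\varphi Y$ is $X\times Y$ with $(x,y)+(x',y')=(x+\varphi_y(x'),y+y')$, $\varphi_y=\varphi(y)$; $\langle 1,0\rangle(x)=(x,0)$, $\langle 0,1\rangle(y)=(0,y)$, $\pi_2(x,y)=y$. A split extension in $\mathsf{VGrp}$ means: the structure on the middle object makes it a $V$-group, all three maps are $V$-homomorphisms, $\pi_2\circ\langle 0,1\rangle=1_Y$, and $\langle 1,0\rangle$ is a kernel of $\pi_2$ in $\mathsf{VGrp}$. *)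

theory Defs
  imports "HOL-Algebra.Group_Action"
begin

definition quantale :: "('v::complete_lattice \<Rightarrow> 'v \<Rightarrow> 'v) \<Rightarrow> 'v \<Rightarrow> bool" where
  "quantale t k \<longleftrightarrow>
     (\<forall>u v. t u v = t v u) \<and>
     (\<forall>u v w. t (t u v) w = t u (t v w)) \<and>
     (\<forall>u. t k u = u \<and> t u k = u) \<and>
     (\<forall>u S. t u (Sup S) = Sup (t u ` S)) \<and>
     (\<forall>u S. t (Sup S) u = Sup ((\<lambda>s. t s u) ` S))"

definition frame_lattice :: "'v::complete_lattice itself \<Rightarrow> bool" where
  "frame_lattice _ \<longleftrightarrow> (\<forall>(u::'v) S. inf u (Sup S) = Sup (inf u ` S))"

definition vcat :: "('v::complete_lattice \<Rightarrow> 'v \<Rightarrow> 'v) \<Rightarrow> 'v \<Rightarrow> 'x set \<Rightarrow> ('x \<Rightarrow> 'x \<Rightarrow> 'v) \<Rightarrow> bool" where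
  "vcat t k X a \<longleftrightarrow>
     (\<forall>x\<in>X. k \<le> a x x) \<and>
     (\<forall>x\<in>X. \<forall>x'\<in>X. \<forall>x''\<in>X. t (a x x') (a x' x'') \<le> a x x'')"

definition vfunctor :: "'x set \<Rightarrow> ('x \<Rightarrow> 'x \<Rightarrow> 'v::complete_lattice) \<Rightarrow> 'y set \<Rightarrow> ('y \<Rightarrow> 'y \<Rightarrow> 'v) \<Rightarrow> ('x \<Rightarrow> 'y) \<Rightarrow> bool" where
  "vfunctor X a Y b f \<longleftrightarrow> f \<in> X \<rightarrow> Y \<and> (\<forall>x\<in>X. \<forall>x'\<in>X. a x x' \<le> b (f x) (f x'))"

text \<open>A V-group: a group (written multiplicatively in HOL-Algebra; the paper writes it
additively) with a V-category structure compatible with the group operation.\<close>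
definition vgroup :: "('v::complete_lattice \<Rightarrow> 'v \<Rightarrow> 'v) \<Rightarrow> 'v \<Rightarrow> 'x monoid \<Rightarrow> ('x \<Rightarrow> 'x \<Rightarrow> 'v) \<Rightarrow> bool" where
  "vgroup t k G a \<longleftrightarrow> group G \<and> vcat t k (carrier G) a \<and>
     (\<forall>x1\<in>carrier G. \<forall>x2\<in>carrier G. \<forall>x1'\<in>carrier G. \<forall>x2'\<in>carrier G.
        t (a x1 x2) (a x1' x2') \<le> a (x1 \<otimes>\<^bsub>G\<^esub> x1') (x2 \<otimes>\<^bsub>G\<^esub> x2'))"

definition vhom :: "'x monoid \<Rightarrow> ('x \<Rightarrow> 'x \<Rightarrow> 'v::complete_lattice) \<Rightarrow> 'y monoid \<Rightarrow> ('y \<Rightarrow> 'y \<Rightarrow> 'v) \<Rightarrow> ('x \<Rightarrow> 'y) \<Rightarrow> bool" where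
  "vhom G a H b f \<longleftrightarrow> f \<in> hom G H \<and> vfunctor (carrier G) a (carrier H) b f"

text \<open>The universal property quantifies over test V-groups whose carrier lives in type 'z.\<close>
definition vgrp_kernel ::
  "'z itself \<Rightarrow> ('v::complete_lattice \<Rightarrow> 'v \<Rightarrow> 'v) \<Rightarrow> 'v \<Rightarrow>
   'k monoid \<Rightarrow> ('k \<Rightarrow> 'k \<Rightarrow> 'v) \<Rightarrow> 'g monoid \<Rightarrow> ('g \<Rightarrow> 'g \<Rightarrow> 'v) \<Rightarrow> 'h monoid \<Rightarrow>
   ('k \<Rightarrow> 'g) \<Rightarrow> ('g \<Rightarrow> 'h) \<Rightarrow> bool" where
  "vgrp_kernel _ t k K c G a H \<kappa> f \<longleftrightarrow>
     (\<forall>x\<in>carrier K. f (\<kappa> x) = \<one>\<^bsub>H\<^esub>) \<and>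
     (\<forall>(Z::'z monoid) d g. vgroup t k Z d \<and> vhom Z d G a g \<and> (\<forall>z\<in>carrier Z. f (g z) = \<one>\<^bsub>H\<^esub>) \<longrightarrow>
        (\<exists>h. vhom Z d K c h \<and> (\<forall>z\<in>carrier Z. \<kappa> (h z) = g z) \<and>
             (\<forall>h'. vhom Z d K c h' \<and> (\<forall>z\<in>carrier Z. \<kappa> (h' z) = g z) \<longrightarrow>
                   (\<forall>z\<in>carrier Z. h' z = h z))))"

definition vgrp_split_ext ::
  "'z itself \<Rightarrow> ('v::complete_lattice \<Rightarrow> 'v \<Rightarrow> 'v) \<Rightarrow> 'v \<Rightarrow>
   'x monoid \<Rightarrow> ('x \<Rightarrow> 'x \<Rightarrow> 'v) \<Rightarrow> 'm monoid \<Rightarrow> ('m \<Rightarrow> 'm \<Rightarrow> 'v) \<Rightarrow> 'y monoid \<Rightarrow> ('y \<Rightarrow> 'y \<Rightarrow> 'v) \<Rightarrow>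
   ('x \<Rightarrow> 'm) \<Rightarrow> ('m \<Rightarrow> 'y) \<Rightarrow> ('y \<Rightarrow> 'm) \<Rightarrow> bool" where
  "vgrp_split_ext Z t k X a M m Y b \<kappa> p s \<longleftrightarrow>
     vgroup t k M m \<and> vhom X a M m \<kappa> \<and> vhom M m Y b p \<and> vhom Y b M m s \<and>
     (\<forall>y\<in>carrier Y. p (s y) = y) \<and>
     vgrp_kernel Z t k X a M m Y \<kappa> p"

definition semidirect :: "'x monoid \<Rightarrow> 'y monoid \<Rightarrow> ('y \<Rightarrow> 'x \<Rightarrow> 'x) \<Rightarrow> ('x \<times> 'y) monoid" where
  "semidirect X Y \<phi> =
     \<lparr> carrier = carrier X \<times> carrier Y,
       mult = (\<lambda>(x, y) (x', y'). (x \<otimes>\<^bsub>X\<^esub> \<phi> y x', y \<otimes>\<^bsub>Y\<^esub> y')),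
       one = (\<one>\<^bsub>X\<^esub>, \<one>\<^bsub>Y\<^esub>) \<rparr>"

definition lex :: "('x \<Rightarrow> 'x \<Rightarrow> 'v) \<Rightarrow> ('y \<Rightarrow> 'y \<Rightarrow> 'v) \<Rightarrow> ('x \<times> 'y) \<Rightarrow> ('x \<times> 'y) \<Rightarrow> 'v" where
  "lex a b = (\<lambda>(x, y) (x', y'). if y = y' then a x x' else b y y')"

definition inj1 :: "'y monoid \<Rightarrow> 'x \<Rightarrow> 'x \<times> 'y" where
  "inj1 Y = (\<lambda>x. (x, \<one>\<^bsub>Y\<^esub>))"

definition inj2 :: "'x monoid \<Rightarrow> 'y \<Rightarrow> 'x \<times> 'y" where
  "inj2 X = (\<lambda>y. (\<one>\<^bsub>X\<^esub>, y))"

end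

theory Submission
  imports Defs
begin

(* Because k is the top element, u \<otimes> v lies below u and v, and V-group distances are
   invariant under translations: c u v \<le> c (w + u) (w + v) and c u v \<le> c (u + w) (v + w).
   (i) \<Rightarrow> (ii): compatibility of lex with the products (x,y) + (0,0) = (x,y) and
   (0,0) + (0,y) = (0,y) gives b(y,0) \<otimes> b(0,y) \<le> lex((x,y),(0,y)) = a(x,0) for y \<noteq> 0.
   (ii) \<Rightarrow> (i): an instance of the transitivity or compatibility axiom for lex does not follow
   from those of a and b only when two distances between distinct second coordinates have to
   bound a distance between equal ones. Translating in Y turns that pair into b(z,0) \<otimes> b(0,z)
   with z \<noteq> 0, which (ii) bounds by a(x - x', 0) \<le> a(x, x'). *)

lemma quantale_unit:
  assumes "quantale t k"
  shows quantale_unit_left: "t k u = u" and quantale_unit_right: "t u k = u"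
  using assms unfolding quantale_def by blast+

lemma quantale_mono:
  assumes "quantale t k" "u \<le> u'" "v \<le> v'"
  shows "t u v \<le> t u' v'"
proof -
  have right_mono: "t w v \<le> t w v'" if "v \<le> v'" for w v v'
  proof -
    have "t w (Sup {v, v'}) = Sup (t w ` {v, v'})" using assms(1) unfolding quantale_def by blast
    then have "t w v' = sup (t w v) (t w v')" using that by (simp add: sup_absorb2)
    then show ?thesis by (metis sup.cobounded1)
  qed
  have comm: "t w w' = t w' w" for w w' using assms(1) unfolding quantale_def by blast
  have "t u v \<le> t u v'" using right_mono assms(3) .
  also have "\<dots> \<le> t u' v'" using right_mono[OF assms(2)] comm by metis
  finally show ?thesis .
qed

lemma integral_quantale_le_left:
  assumes "quantale t k" "k = Orderings.top"
  shows "t u v \<le> u"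
proof -
  have "t u v \<le> t u k" using quantale_mono[OF assms(1) order_refl] assms(2) by simp
  also have "\<dots> = u" using quantale_unit_right[OF assms(1)] .
  finally show ?thesis .
qed

lemma integral_quantale_le_right:
  assumes "quantale t k" "k = Orderings.top"
  shows "t u v \<le> v"
proof -
  have "t u v \<le> t k v" using quantale_mono[OF assms(1) _ order_refl] assms(2) by simp
  also have "\<dots> = v" using quantale_unit_left[OF assms(1)] .
  finally show ?thesis .
qed

lemma vgroup_refl_top:
  assumes "k = Orderings.top" "vgroup t k G c" "w \<in> carrier G"
  shows "c w w = Orderings.top"
  using assms unfolding vgroup_def vcat_def by (simp add: top_unique)

lemma vgroup_mult_left:
  assumes "quantale t k" "k = Orderings.top" "vgroup t k G c"
    and "u \<in> carrier G" "v \<in> carrier G" "w \<in> carrier G"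
  shows "c u v \<le> c (w \<otimes>\<^bsub>G\<^esub> u) (w \<otimes>\<^bsub>G\<^esub> v)"
proof -
  have "c u v = t (c w w) (c u v)"
    using assms vgroup_refl_top[of k t G c w] quantale_unit_left by metis
  also have "\<dots> \<le> c (w \<otimes>\<^bsub>G\<^esub> u) (w \<otimes>\<^bsub>G\<^esub> v)" using assms unfolding vgroup_def by blast
  finally show ?thesis .
qed

lemma vgroup_mult_right:
  assumes "quantale t k" "k = Orderings.top" "vgroup t k G c"
    and "u \<in> carrier G" "v \<in> carrier G" "w \<in> carrier G"
  shows "c u v \<le> c (u \<otimes>\<^bsub>G\<^esub> w) (v \<otimes>\<^bsub>G\<^esub> w)"
proof -
  have "c u v = t (c u v) (c w w)"
    using assms vgroup_refl_top[of k t G c w] quantale_unit_right by metis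
  also have "\<dots> \<le> c (u \<otimes>\<^bsub>G\<^esub> w) (v \<otimes>\<^bsub>G\<^esub> w)" using assms unfolding vgroup_def by blast
  finally show ?thesis .
qed

lemma vgroup_dist_one_le:
  assumes "quantale t k" "k = Orderings.top" "vgroup t k G c" "u \<in> carrier G" "v \<in> carrier G"
  shows "c (u \<otimes>\<^bsub>G\<^esub> inv\<^bsub>G\<^esub> v) \<one>\<^bsub>G\<^esub> \<le> c u v"
proof -
  interpret G: group G using assms(3) unfolding vgroup_def by blast
  have "c (u \<otimes>\<^bsub>G\<^esub> inv\<^bsub>G\<^esub> v) \<one>\<^bsub>G\<^esub>
      \<le> c (u \<otimes>\<^bsub>G\<^esub> inv\<^bsub>G\<^esub> v \<otimes>\<^bsub>G\<^esub> v) (\<one>\<^bsub>G\<^esub> \<otimes>\<^bsub>G\<^esub> v)"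
    using vgroup_mult_right[OF assms(1-3), of "u \<otimes>\<^bsub>G\<^esub> inv\<^bsub>G\<^esub> v" "\<one>\<^bsub>G\<^esub>" v] assms(4,5)
    by simp
  then show ?thesis using assms(4,5) by (simp add: G.m_assoc)
qed

lemma semidirect_carrier [simp]: "carrier (semidirect X Y \<phi>) = carrier X \<times> carrier Y"
  and semidirect_mult [simp]:
    "(x, y) \<otimes>\<^bsub>semidirect X Y \<phi>\<^esub> (x', y') = (x \<otimes>\<^bsub>X\<^esub> \<phi> y x', y \<otimes>\<^bsub>Y\<^esub> y')"
  and semidirect_one [simp]: "\<one>\<^bsub>semidirect X Y \<phi>\<^esub> = (\<one>\<^bsub>X\<^esub>, \<one>\<^bsub>Y\<^esub>)"
  by (simp_all add: semidirect_def)

lemma lex_apply [simp]: "lex a b (x, y) (x', y') = (if y = y' then a x x' else b y y')"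
  by (simp add: lex_def)

locale group_action_by_hom =
  fixes X :: "'x monoid" and Y :: "'y monoid" and \<phi> :: "'y \<Rightarrow> 'x \<Rightarrow> 'x"
  assumes group_X: "group X"
    and action: "group_action Y (carrier X) \<phi>"
    and action_hom: "\<forall>y\<in>carrier Y. \<phi> y \<in> hom X X"
begin

sublocale X: group X by (rule group_X)
sublocale action: group_action Y "carrier X" \<phi> by (rule action)
sublocale Y: group Y using action.group_hom group_hom.axioms(1) by blast

abbreviation S :: "('x \<times> 'y) monoid" where "S \<equiv> semidirect X Y \<phi>"

lemma action_closed: "y \<in> carrier Y \<Longrightarrow> x \<in> carrier X \<Longrightarrow> \<phi> y x \<in> carrier X"
  using action.element_image by blast

lemma action_one [simp]: "x \<in> carrier X \<Longrightarrow> \<phi> \<one>\<^bsub>Y\<^esub> x = x"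
  using action.id_eq_one by (metis restrict_apply')

lemma action_compose:
  "y \<in> carrier Y \<Longrightarrow> y' \<in> carrier Y \<Longrightarrow> x \<in> carrier X \<Longrightarrow>
    \<phi> (y \<otimes>\<^bsub>Y\<^esub> y') x = \<phi> y (\<phi> y' x)"
  using action.composition_rule by blast

lemma action_mult:
  "y \<in> carrier Y \<Longrightarrow> x \<in> carrier X \<Longrightarrow> x' \<in> carrier X \<Longrightarrow>
    \<phi> y (x \<otimes>\<^bsub>X\<^esub> x') = \<phi> y x \<otimes>\<^bsub>X\<^esub> \<phi> y x'"
  using action_hom by (simp add: hom_mult)

lemma action_fixes_one [simp]: "y \<in> carrier Y \<Longrightarrow> \<phi> y \<one>\<^bsub>X\<^esub> = \<one>\<^bsub>X\<^esub>"
  using action_hom X.group_axioms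
  by (simp add: group_hom.hom_one group_hom_axioms_def group_hom_def)

lemma group_semidirect: "group S"
proof (rule groupI)
  fix p q assume "p \<in> carrier S" "q \<in> carrier S"
  then show "p \<otimes>\<^bsub>S\<^esub> q \<in> carrier S" by (auto simp: action_closed)
next
  fix p q r assume "p \<in> carrier S" "q \<in> carrier S" "r \<in> carrier S"
  then show "p \<otimes>\<^bsub>S\<^esub> q \<otimes>\<^bsub>S\<^esub> r = p \<otimes>\<^bsub>S\<^esub> (q \<otimes>\<^bsub>S\<^esub> r)"
    by (auto simp: action_closed action_mult action_compose X.m_assoc Y.m_assoc)
next
  fix p assume "p \<in> carrier S"
  then show "\<one>\<^bsub>S\<^esub> \<otimes>\<^bsub>S\<^esub> p = p" by auto
next
  fix p assume "p \<in> carrier S"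
  then obtain x y where p: "p = (x, y)" "x \<in> carrier X" "y \<in> carrier Y" by auto
  let ?q = "(\<phi> (inv\<^bsub>Y\<^esub> y) (inv\<^bsub>X\<^esub> x), inv\<^bsub>Y\<^esub> y)"
  have "?q \<in> carrier S" "?q \<otimes>\<^bsub>S\<^esub> p = \<one>\<^bsub>S\<^esub>"
    using p by (simp_all add: action_closed action_mult[symmetric])
  then show "\<exists>q\<in>carrier S. q \<otimes>\<^bsub>S\<^esub> p = \<one>\<^bsub>S\<^esub>" by blast
qed simp

end

locale vgroup_action = group_action_by_hom X Y \<phi>
  for X :: "'x monoid" and Y :: "'y monoid" and \<phi> :: "'y \<Rightarrow> 'x \<Rightarrow> 'x" +
  fixes t :: "'v::complete_lattice \<Rightarrow> 'v \<Rightarrow> 'v" and k :: 'v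
    and a :: "'x \<Rightarrow> 'x \<Rightarrow> 'v" and b :: "'y \<Rightarrow> 'y \<Rightarrow> 'v"
  assumes quantale: "quantale t k" and integral: "k = Orderings.top"
    and vgroup_X: "vgroup t k X a" and vgroup_Y: "vgroup t k Y b"
    and action_vfunctor: "\<forall>y\<in>carrier Y. vfunctor (carrier X) a (carrier X) a (\<phi> y)"
begin

abbreviation round_trip_bound :: bool where
  "round_trip_bound \<equiv> \<forall>x\<in>carrier X. \<forall>y\<in>carrier Y - {\<one>\<^bsub>Y\<^esub>}. t (b y \<one>\<^bsub>Y\<^esub>) (b \<one>\<^bsub>Y\<^esub> y) \<le> a x \<one>\<^bsub>X\<^esub>"

lemma lex_le_snd:
  assumes "p \<in> carrier S" "p' \<in> carrier S"
  shows "lex a b p p' \<le> b (snd p) (snd p')"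
  using assms vgroup_refl_top[OF integral vgroup_Y] by (cases p; cases p') auto

lemma inj1_vhom: "vhom X a S (lex a b) (inj1 Y)"
  by (auto simp: vhom_def vfunctor_def hom_def inj1_def)

lemma snd_vhom: "vhom S (lex a b) Y b snd"
  using lex_le_snd by (auto simp: vhom_def vfunctor_def hom_def)

lemma inj2_vhom: "vhom Y b S (lex a b) (inj2 X)"
  using vgroup_refl_top[OF integral vgroup_X]
  by (auto simp: vhom_def vfunctor_def hom_def inj2_def)

lemma inj1_kernel: "vgrp_kernel TYPE('z) t k X a S (lex a b) Y (inj1 Y) snd"
  unfolding vgrp_kernel_def
proof (intro conjI allI impI)
  show "\<forall>x\<in>carrier X. snd (inj1 Y x) = \<one>\<^bsub>Y\<^esub>" by (simp add: inj1_def)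
next
  fix Z :: "'z monoid" and d g
  assume "vgroup t k Z d \<and> vhom Z d S (lex a b) g \<and> (\<forall>z\<in>carrier Z. snd (g z) = \<one>\<^bsub>Y\<^esub>)"
  then have Z: "group Z" and g_vhom: "vhom Z d S (lex a b) g"
    and g_snd: "\<And>z. z \<in> carrier Z \<Longrightarrow> snd (g z) = \<one>\<^bsub>Y\<^esub>"
    unfolding vgroup_def by blast+
  interpret Z: group Z by (rule Z)
  define h where "h z = fst (g z)" for z
  have g_eq: "g z = inj1 Y (h z)" if "z \<in> carrier Z" for z
    using g_snd[OF that] by (simp add: h_def inj1_def prod_eq_iff)
  have h_closed: "h z \<in> carrier X" if "z \<in> carrier Z" for z
    using g_vhom that unfolding vhom_def vfunctor_def by (auto simp: h_def dest: funcset_mem)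
  have h_vhom: "vhom Z d X a h"
    unfolding vhom_def vfunctor_def
  proof (intro conjI ballI)
    show "h \<in> hom Z X"
    proof (rule homI)
      fix z z' assume zz': "z \<in> carrier Z" "z' \<in> carrier Z"
      then have "g (z \<otimes>\<^bsub>Z\<^esub> z') = g z \<otimes>\<^bsub>S\<^esub> g z'"
        using g_vhom by (simp add: vhom_def hom_def)
      then show "h (z \<otimes>\<^bsub>Z\<^esub> z') = h z \<otimes>\<^bsub>X\<^esub> h z'"
        using zz' h_closed by (simp add: g_eq inj1_def)
    qed (rule h_closed)
  next
    show "h \<in> carrier Z \<rightarrow> carrier X" using h_closed by blast
  next
    fix z z' assume zz': "z \<in> carrier Z" "z' \<in> carrier Z"
    then have "d z z' \<le> lex a b (g z) (g z')"
      using g_vhom by (simp add: vhom_def vfunctor_def)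
    then show "d z z' \<le> a (h z) (h z')" using zz' by (simp add: g_eq inj1_def)
  qed
  show "\<exists>h. vhom Z d X a h \<and> (\<forall>z\<in>carrier Z. inj1 Y (h z) = g z) \<and>
      (\<forall>h'. vhom Z d X a h' \<and> (\<forall>z\<in>carrier Z. inj1 Y (h' z) = g z) \<longrightarrow>
        (\<forall>z\<in>carrier Z. h' z = h z))"
  proof (intro exI[of _ h] conjI allI impI ballI)
    fix z assume "z \<in> carrier Z"
    then show "inj1 Y (h z) = g z" using g_eq by simp
  next
    fix h' z assume "vhom Z d X a h' \<and> (\<forall>z\<in>carrier Z. inj1 Y (h' z) = g z)" "z \<in> carrier Z"
    then show "h' z = h z" using g_eq by (simp add: inj1_def)
  qed (rule h_vhom)
qed

lemma vgroup_lex_imp_round_trip_bound: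
  assumes "vgroup t k S (lex a b)"
  shows round_trip_bound
proof (intro ballI)
  fix x y assume x: "x \<in> carrier X" and y: "y \<in> carrier Y - {\<one>\<^bsub>Y\<^esub>}"
  have "(x, y) \<in> carrier S" "(\<one>\<^bsub>X\<^esub>, \<one>\<^bsub>Y\<^esub>) \<in> carrier S" "(\<one>\<^bsub>X\<^esub>, y) \<in> carrier S"
    using x y by auto
  then have "t (lex a b (x, y) (\<one>\<^bsub>X\<^esub>, \<one>\<^bsub>Y\<^esub>)) (lex a b (\<one>\<^bsub>X\<^esub>, \<one>\<^bsub>Y\<^esub>) (\<one>\<^bsub>X\<^esub>, y))
      \<le> lex a b ((x, y) \<otimes>\<^bsub>S\<^esub> (\<one>\<^bsub>X\<^esub>, \<one>\<^bsub>Y\<^esub>)) ((\<one>\<^bsub>X\<^esub>, \<one>\<^bsub>Y\<^esub>) \<otimes>\<^bsub>S\<^esub> (\<one>\<^bsub>X\<^esub>, y))"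
    using assms unfolding vgroup_def by blast
  then show "t (b y \<one>\<^bsub>Y\<^esub>) (b \<one>\<^bsub>Y\<^esub> y) \<le> a x \<one>\<^bsub>X\<^esub>"
    using x y by auto
qed

context
  assumes round_trip_bound: round_trip_bound
begin

lemma round_trip_le:
  assumes "z \<in> carrier Y" "z \<noteq> \<one>\<^bsub>Y\<^esub>" "u \<le> b z \<one>\<^bsub>Y\<^esub>" "v \<le> b \<one>\<^bsub>Y\<^esub> z"
    and "x \<in> carrier X" "x' \<in> carrier X"
  shows "t u v \<le> a x x'"
proof -
  have "t u v \<le> t (b z \<one>\<^bsub>Y\<^esub>) (b \<one>\<^bsub>Y\<^esub> z)" using quantale_mono[OF quantale] assms(3,4) .
  also have "\<dots> \<le> a (x \<otimes>\<^bsub>X\<^esub> inv\<^bsub>X\<^esub> x') \<one>\<^bsub>X\<^esub>" using round_trip_bound assms by simp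
  also have "\<dots> \<le> a x x'" using vgroup_dist_one_le[OF quantale integral vgroup_X] assms(5,6) .
  finally show ?thesis .
qed

lemma cycle_le:
  assumes "y \<in> carrier Y" "y' \<in> carrier Y" "y \<noteq> y'" "x \<in> carrier X" "x' \<in> carrier X"
  shows "t (b y y') (b y' y) \<le> a x x'"
proof (rule round_trip_le)
  let ?z = "inv\<^bsub>Y\<^esub> y' \<otimes>\<^bsub>Y\<^esub> y"
  show "?z \<in> carrier Y" "?z \<noteq> \<one>\<^bsub>Y\<^esub>"
    using assms(1-3) by (auto simp: Y.inv_solve_left')
  show "b y y' \<le> b ?z \<one>\<^bsub>Y\<^esub>" "b y' y \<le> b \<one>\<^bsub>Y\<^esub> ?z"
    using vgroup_mult_left[OF quantale integral vgroup_Y assms(1,2) Y.inv_closed[OF assms(2)]]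
      vgroup_mult_left[OF quantale integral vgroup_Y assms(2,1) Y.inv_closed[OF assms(2)]] assms(1,2)
    by simp_all
qed (use assms in auto)

lemma cross_le:
  assumes "y1 \<in> carrier Y" "y2 \<in> carrier Y" "y1' \<in> carrier Y" "y2' \<in> carrier Y"
    and "y1 \<noteq> y2" "y1 \<otimes>\<^bsub>Y\<^esub> y1' = y2 \<otimes>\<^bsub>Y\<^esub> y2'" "x \<in> carrier X" "x' \<in> carrier X"
  shows "t (b y1 y2) (b y1' y2') \<le> a x x'"
proof (rule round_trip_le)
  let ?z = "inv\<^bsub>Y\<^esub> y2 \<otimes>\<^bsub>Y\<^esub> y1"
  show "?z \<in> carrier Y" "?z \<noteq> \<one>\<^bsub>Y\<^esub>"
    using assms(1,2,5) by (auto simp: Y.inv_solve_left')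
  show "b y1 y2 \<le> b ?z \<one>\<^bsub>Y\<^esub>"
    using vgroup_mult_left[OF quantale integral vgroup_Y assms(1,2) Y.inv_closed[OF assms(2)]] assms(1,2)
    by simp
  have "?z \<otimes>\<^bsub>Y\<^esub> y1' = inv\<^bsub>Y\<^esub> y2 \<otimes>\<^bsub>Y\<^esub> (y2 \<otimes>\<^bsub>Y\<^esub> y2')"
    using assms(1-4,6) by (simp add: Y.m_assoc)
  also have "\<dots> = y2'" using assms(2,4) by (simp add: Y.m_assoc[symmetric])
  finally have "y2' \<otimes>\<^bsub>Y\<^esub> inv\<^bsub>Y\<^esub> y1' = ?z"
    using assms(1-4) by (simp add: Y.inv_solve_right')
  then show "b y1' y2' \<le> b \<one>\<^bsub>Y\<^esub> ?z"
    using vgroup_mult_right[OF quantale integral vgroup_Y, of y1' y2' "inv\<^bsub>Y\<^esub> y1'"] assms(3,4)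
    by simp
qed (use assms in auto)

lemma lex_vcat: "vcat t k (carrier S) (lex a b)"
  unfolding vcat_def
proof (intro conjI ballI)
  fix p assume "p \<in> carrier S"
  then show "k \<le> lex a b p p"
    using integral vgroup_refl_top[OF integral vgroup_X] by (cases p) auto
next
  fix p p' p'' assume "p \<in> carrier S" "p' \<in> carrier S" "p'' \<in> carrier S"
  then obtain x y x' y' x'' y'' where p: "p = (x, y)" "p' = (x', y')" "p'' = (x'', y'')"
    and carrier: "x \<in> carrier X" "y \<in> carrier Y" "x' \<in> carrier X" "y' \<in> carrier Y"
      "x'' \<in> carrier X" "y'' \<in> carrier Y"
    by auto
  have trans_a: "t (a x x') (a x' x'') \<le> a x x''"
    using vgroup_X carrier unfolding vgroup_def vcat_def by blast
  have trans_b: "t (b y y') (b y' y'') \<le> b y y''"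
    using vgroup_Y carrier unfolding vgroup_def vcat_def by blast
  consider "y = y'" | "y \<noteq> y'" "y' = y''" | "y \<noteq> y'" "y = y''" | "y \<noteq> y'" "y' \<noteq> y''" "y \<noteq> y''"
    by blast
  then show "t (lex a b p p') (lex a b p' p'') \<le> lex a b p p''"
  proof cases
    case 1
    then show ?thesis using trans_a integral_quantale_le_right[OF quantale integral] by (auto simp: p)
  next
    case 2
    then show ?thesis using integral_quantale_le_left[OF quantale integral] by (auto simp: p)
  next
    case 3
    then show ?thesis using cycle_le carrier by (auto simp: p)
  next
    case 4
    then show ?thesis using trans_b by (auto simp: p)
  qed
qed

lemma lex_mult_compatible:
  assumes "p1 \<in> carrier S" "p2 \<in> carrier S" "p1' \<in> carrier S" "p2' \<in> carrier S"
  shows "t (lex a b p1 p2) (lex a b p1' p2') \<le> lex a b (p1 \<otimes>\<^bsub>S\<^esub> p1') (p2 \<otimes>\<^bsub>S\<^esub> p2')"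
proof -
  obtain x1 y1 x2 y2 x1' y1' x2' y2'
    where p: "p1 = (x1, y1)" "p2 = (x2, y2)" "p1' = (x1', y1')" "p2' = (x2', y2')"
      and carrier: "x1 \<in> carrier X" "y1 \<in> carrier Y" "x2 \<in> carrier X" "y2 \<in> carrier Y"
        "x1' \<in> carrier X" "y1' \<in> carrier Y" "x2' \<in> carrier X" "y2' \<in> carrier Y"
    using assms by (cases p1; cases p2; cases p1'; cases p2') auto
  consider "y1 = y2" "y1' = y2'" | "y1 \<noteq> y2" "y1 \<otimes>\<^bsub>Y\<^esub> y1' = y2 \<otimes>\<^bsub>Y\<^esub> y2'"
    | "y1 \<otimes>\<^bsub>Y\<^esub> y1' \<noteq> y2 \<otimes>\<^bsub>Y\<^esub> y2'"
    using carrier by (metis Y.Units_eq Y.Units_l_cancel)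
  then show ?thesis
  proof cases
    case 1
    have "t (a x1 x2) (a x1' x2') \<le> t (a x1 x2) (a (\<phi> y1 x1') (\<phi> y1 x2'))"
      using action_vfunctor carrier quantale_mono[OF quantale] unfolding vfunctor_def by blast
    also have "\<dots> \<le> a (x1 \<otimes>\<^bsub>X\<^esub> \<phi> y1 x1') (x2 \<otimes>\<^bsub>X\<^esub> \<phi> y1 x2')"
      using vgroup_X carrier action_closed unfolding vgroup_def by blast
    finally show ?thesis using 1 by (simp add: p)
  next
    case 2
    then have "y1' \<noteq> y2'" using carrier by auto
    then show ?thesis using 2 cross_le carrier action_closed by (simp add: p)
  next
    case 3
    have "t (lex a b p1 p2) (lex a b p1' p2') \<le> t (b y1 y2) (b y1' y2')"
      using quantale_mono[OF quantale lex_le_snd[OF assms(1,2)] lex_le_snd[OF assms(3,4)]]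
      by (simp add: p)
    also have "\<dots> \<le> b (y1 \<otimes>\<^bsub>Y\<^esub> y1') (y2 \<otimes>\<^bsub>Y\<^esub> y2')"
      using vgroup_Y carrier unfolding vgroup_def by blast
    finally show ?thesis using 3 by (simp add: p)
  qed
qed

lemma vgroup_lex: "vgroup t k S (lex a b)"
  unfolding vgroup_def using group_semidirect lex_vcat lex_mult_compatible by blast

end

theorem split_ext_iff_round_trip_bound:
  "vgrp_split_ext TYPE('z) t k X a S (lex a b) Y b (inj1 Y) snd (inj2 X) \<longleftrightarrow> round_trip_bound"
proof
  assume "vgrp_split_ext TYPE('z) t k X a S (lex a b) Y b (inj1 Y) snd (inj2 X)"
  then show round_trip_bound
    using vgroup_lex_imp_round_trip_bound unfolding vgrp_split_ext_def by blast
next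
  assume round_trip_bound
  then show "vgrp_split_ext TYPE('z) t k X a S (lex a b) Y b (inj1 Y) snd (inj2 X)"
    unfolding vgrp_split_ext_def
    using vgroup_lex inj1_vhom snd_vhom inj2_vhom inj1_kernel by (simp add: inj2_def)
qed

end

theorem theorem7p4:
  fixes t :: "'v::complete_lattice \<Rightarrow> 'v \<Rightarrow> 'v" and k :: 'v
    and X :: "'x monoid" and a :: "'x \<Rightarrow> 'x \<Rightarrow> 'v"
    and Y :: "'y monoid" and b :: "'y \<Rightarrow> 'y \<Rightarrow> 'v"
    and \<phi> :: "'y \<Rightarrow> 'x \<Rightarrow> 'x"
  assumes "quantale t k" and "frame_lattice TYPE('v)" and "k = Orderings.top"
    and "vgroup t k X a" and "vgroup t k Y b"
    and "group_action Y (carrier X) \<phi>"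
    and "\<forall>y\<in>carrier Y. \<phi> y \<in> hom X X"
    and "\<forall>y\<in>carrier Y. vfunctor (carrier X) a (carrier X) a (\<phi> y)"
  shows "vgrp_split_ext TYPE('z) t k X a (semidirect X Y \<phi>) (lex a b) Y b (inj1 Y) snd (inj2 X)
     \<longleftrightarrow> (\<forall>x\<in>carrier X. \<forall>y\<in>carrier Y - {\<one>\<^bsub>Y\<^esub>}. t (b y \<one>\<^bsub>Y\<^esub>) (b \<one>\<^bsub>Y\<^esub> y) \<le> a x \<one>\<^bsub>X\<^esub>)"
proof -
  interpret vgroup_action X Y \<phi> t k a b
    using assms(1,3-8)
    by (intro vgroup_action.intro group_action_by_hom.intro vgroup_action_axioms.intro)
      (auto simp: vgroup_def)
  show ?thesis by (rule split_ext_iff_round_trip_bound)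
qed

end
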